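(* Let $\mathcal B_{\rm com}$ be the set of operators on $\mathcal H=\mathcal H_{\rm loc}^{\otimes n}$ that commute with every (physical) quantum i.i.d. state $\hat\rho_{\rm loc}^{\otimes n}$. (a) For spin systems and massless boson systems (where every density matrix $\hat\rho_{\rm loc}$ on $\mathcal H_{\rm loc}$ is allowed), $\mathcal B_{\rm com}=\{\hat P_\sigma:\sigma\in\mathfrak S_n\}''={\rm span}\{\hat P_\sigma:\sigma\in\mathfrak S_n\}$. (b) For massive fermion and boson systems subject to the number-superselection rule (where only $\hat\rho_{\rm loc}$ with $[\hat\rho_{\rm loc},\hat n]=0$ are allowed, $\hat n$ the single-site number operator), $\mathcal B_{\rm com}=\{\hat P_\sigma:\sigma\in\mathfrak S_n\}\cup\{\hat n_i:i\in\Lambda\})''$, i.e. the double commutant of the set consisting of all permutation operators and all site number operators $\hat n_i$.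
   Context: A lattice of $n$ sites $\Lambda=\{1,\dots,n\}$, each carrying a copy of a finite-dimensional local Hilbert space $\mathcal H_{\rm loc}$ (for fermions the local Fock space of a site, the global space being identified with $\mathcal H_{\rm loc}^{\otimes n}$), $\mathcal H=\mathcal H_{\rm loc}^{\otimes n}$. For a single-site operator $X$, $X_i$ denotes $X$ on site $i$. $\mathfrak S_n$ is the symmetric group; the permutation operator $\hat P_\sigma$ is the unitary on $\mathcal H$ with $\hat P_\sigma \hat X_i\hat P_\sigma^\dagger=\hat X_{\sigma(i)}$ for every single-site operator $X$ (for fermions this means $\hat P_\sigma \hat c_{is}\hat P_\sigma^\dagger=\hat c_{\sigma(i)s}$ for the annihilation operators $\hat c_{is}$, $s$ an internal index). A quantum i.i.d. state is $\hat\rho_{\rm loc}^{\otimes n}$ with $\hat\rho_{\rm loc}$ a density matrix on $\mathcal H_{\rm loc}$. For a set $\mathcal A$ of operators, $\mathcal A'=\{X\in\mathcal B(\mathcal H):[X,Y]=0\ \forall Y\in\mathcal A\}$ is its commutant and $\mathcal A''=(\mathcal A')'$. *)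

theory Defs
  imports Complex_Main "HOL-Library.FuncSet" "HOL-Combinatorics.Permutations"
begin

text \<open>Local Hilbert space: C^d with orthonormal basis indexed by 0..<d.
  Global space H = (C^d)^{tensor n}: basis vectors are configurations
  x : {0..<n} -> {0..<d} (extensional functions).  Operators on H are
  represented by their matrix in this product basis, as functions
  cfg => cfg => complex which vanish outside cfgs x cfgs.\<close>

type_synonym cfg = "nat \<Rightarrow> nat"
type_synonym op = "cfg \<Rightarrow> cfg \<Rightarrow> complex"

definition cfgs :: "nat \<Rightarrow> nat \<Rightarrow> cfg set" where
  "cfgs n d = ({0..<n} \<rightarrow>\<^sub>E {0..<d})"

definition ops :: "nat \<Rightarrow> nat \<Rightarrow> op set" where
  "ops n d = {A. \<forall>x y. (x \<notin> cfgs n d \<or> y \<notin> cfgs n d) \<longrightarrow> A x y = 0}"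

definition opmult :: "nat \<Rightarrow> nat \<Rightarrow> op \<Rightarrow> op \<Rightarrow> op" where
  "opmult n d A B = (\<lambda>x y. if x \<in> cfgs n d \<and> y \<in> cfgs n d
      then (\<Sum>z\<in>cfgs n d. A x z * B z y) else 0)"

definition commutant :: "nat \<Rightarrow> nat \<Rightarrow> op set \<Rightarrow> op set" where
  "commutant n d S = {X \<in> ops n d. \<forall>Y\<in>S. opmult n d X Y = opmult n d Y X}"

definition dcommutant :: "nat \<Rightarrow> nat \<Rightarrow> op set \<Rightarrow> op set" where
  "dcommutant n d S = commutant n d (commutant n d S)"

definition density :: "nat \<Rightarrow> (nat \<Rightarrow> nat \<Rightarrow> complex) \<Rightarrow> bool" where
  "density d \<rho> \<longleftrightarrow>
     (\<forall>i j. (i \<ge> d \<or> j \<ge> d) \<longrightarrow> \<rho> i j = 0) \<and>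
     (\<forall>i j. \<rho> j i = cnj (\<rho> i j)) \<and>
     (\<forall>v::nat \<Rightarrow> complex. 0 \<le> Re (\<Sum>i<d. \<Sum>j<d. cnj (v i) * \<rho> i j * v j)) \<and>
     (\<Sum>i<d. \<rho> i i) = 1"

definition tpow :: "nat \<Rightarrow> nat \<Rightarrow> (nat \<Rightarrow> nat \<Rightarrow> complex) \<Rightarrow> op" where
  "tpow n d \<rho> = (\<lambda>x y. if x \<in> cfgs n d \<and> y \<in> cfgs n d
      then (\<Prod>i<n. \<rho> (x i) (y i)) else 0)"

definition Bcom :: "nat \<Rightarrow> nat \<Rightarrow> ((nat \<Rightarrow> nat \<Rightarrow> complex) \<Rightarrow> bool) \<Rightarrow> op set" where
  "Bcom n d phys = commutant n d {tpow n d \<rho> | \<rho>. phys \<rho>}"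

text \<open>Single-site number operator, diagonal in the local basis with
  eigenvalue N a on basis vector a.  Number superselection for a local state.\<close>
definition commutes_number :: "nat \<Rightarrow> (nat \<Rightarrow> nat) \<Rightarrow> (nat \<Rightarrow> nat \<Rightarrow> complex) \<Rightarrow> bool" where
  "commutes_number d N \<rho> \<longleftrightarrow> (\<forall>a<d. \<forall>b<d. \<rho> a b * of_nat (N b) = of_nat (N a) * \<rho> a b)"

definition num_op :: "nat \<Rightarrow> nat \<Rightarrow> (nat \<Rightarrow> nat) \<Rightarrow> nat \<Rightarrow> op" where
  "num_op n d N i = (\<lambda>x y. if x \<in> cfgs n d \<and> y = x then of_nat (N (x i)) else 0)"

text \<open>Permutation operator P_sigma, with P_sigma X_i P_sigma^dagger = X_{sigma i}:
  P_sigma |x> = s |y> with y (sigma i) = x i.  For fermions (ferm = True) the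
  global Fock space is identified with (C^d)^{tensor n} via site ordering 0<1<...<n-1
  (Jordan--Wigner), local basis vector a having fermion number N a, and the sign is
  s = prod over pairs i<j with sigma i > sigma j of (-1)^(N(x i) * N(x j)).\<close>
definition perm_sign :: "bool \<Rightarrow> (nat \<Rightarrow> nat) \<Rightarrow> nat \<Rightarrow> (nat \<Rightarrow> nat) \<Rightarrow> cfg \<Rightarrow> complex" where
  "perm_sign ferm N n \<sigma> x = (if ferm then
      (\<Prod>p\<in>{(i,j). i < j \<and> j < n \<and> \<sigma> j < \<sigma> i}. (-1) ^ (N (x (fst p)) * N (x (snd p))))
    else 1)"

definition perm_op :: "nat \<Rightarrow> nat \<Rightarrow> bool \<Rightarrow> (nat \<Rightarrow> nat) \<Rightarrow> (nat \<Rightarrow> nat) \<Rightarrow> op" where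
  "perm_op n d ferm N \<sigma> = (\<lambda>y x. if x \<in> cfgs n d \<and> y \<in> cfgs n d \<and> (\<forall>i<n. y (\<sigma> i) = x i)
      then perm_sign ferm N n \<sigma> x else 0)"

definition perm_ops :: "nat \<Rightarrow> nat \<Rightarrow> bool \<Rightarrow> (nat \<Rightarrow> nat) \<Rightarrow> op set" where
  "perm_ops n d ferm N = {perm_op n d ferm N \<sigma> | \<sigma>. \<sigma> permutes {0..<n}}"

definition perm_span :: "nat \<Rightarrow> nat \<Rightarrow> op set" where
  "perm_span n d = {X. \<exists>c :: (nat \<Rightarrow> nat) \<Rightarrow> complex.
      X = (\<lambda>y x. \<Sum>\<sigma>\<in>{\<sigma>. \<sigma> permutes {0..<n}}. c \<sigma> * perm_op n d False (\<lambda>_. 0) \<sigma> y x)}"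

end

(*
  Let P be the span of the operators B_u P_sigma, where B_u projects onto the configurations
  with site occupation numbers u; for N = 0 this is just the span of the permutations. With
  S = {P_sigma} \<union> {n_i}, the theorem follows from B_com \<subseteq> P \<subseteq> S'' \<subseteq> B_com.

  S'' \<subseteq> B_com because a number-conserving rho^{\<otimes>n} commutes with every n_i and with every
  P_sigma; the fermionic signs do not matter, as they depend only on occupation numbers.
  P \<subseteq> S'' because an operator commuting with all n_i is block diagonal.

  For B_com \<subseteq> P, an operator X commuting with all admissible rho^{\<otimes>n} first commutes with
  A^{\<otimes>n} for every number-conserving matrix A: H + s 1 is a multiple of a density matrix for
  Hermitian H and large real s, the matrix elements of the commutator with (B + t D)^{\<otimes>n}
  are polynomials in t, and A = H + i K with H + t K Hermitian for real t. By Ryser's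
  inclusion-exclusion formula the symmetrized matrix units sum_sigma |sigma a><sigma b| are
  combinations of such tensor powers, and they span the algebra W of permutation-invariant
  block-diagonal operators. So X \<in> W', and W' \<subseteq> P is a double commutant theorem, proved here
  without inner products: for a linear projection p onto P, group averages M_{b,e} of slices
  of the matrix of p lie in W and satisfy sum_e M_{b,e}(a, e) = delta_{a b}; hence
  X(a, b) = sum_e (X M_{b,e})(a, e) = sum_e (M_{b,e} X)(a, e), and the right-hand side lies
  in P because P is closed under left multiplication by its generators.
*)

theory Submission
  imports Defs "HOL-Library.Function_Algebras" "HOL-Computational_Algebra.Polynomial"
begin

section \<open>Configurations and the action of permutations\<close>

definition permute_cfg :: "nat \<Rightarrow> (nat \<Rightarrow> nat) \<Rightarrow> cfg \<Rightarrow> cfg" where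
  "permute_cfg n \<sigma> x = restrict (x \<circ> \<sigma>) {0..<n}"

definition occupation :: "nat \<Rightarrow> (nat \<Rightarrow> nat) \<Rightarrow> cfg \<Rightarrow> (nat \<Rightarrow> nat)" where
  "occupation n N x = restrict (N \<circ> x) {0..<n}"

lemma finite_cfgs [simp]: "finite (cfgs n d)"
  unfolding cfgs_def by (simp add: finite_PiE)

lemma cfgs_eqI: "x \<in> cfgs n d \<Longrightarrow> y \<in> cfgs n d \<Longrightarrow> (\<And>i. i < n \<Longrightarrow> x i = y i) \<Longrightarrow> x = y"
  unfolding cfgs_def by (rule PiE_ext) auto

lemma cfgs_less: "x \<in> cfgs n d \<Longrightarrow> i < n \<Longrightarrow> x i < d"
  unfolding cfgs_def by auto

lemma permute_cfg_in: "\<sigma> permutes {0..<n} \<Longrightarrow> x \<in> cfgs n d \<Longrightarrow> permute_cfg n \<sigma> x \<in> cfgs n d"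
  unfolding permute_cfg_def cfgs_def using permutes_in_image by fastforce

lemma permute_cfg_apply: "i < n \<Longrightarrow> permute_cfg n \<sigma> x i = x (\<sigma> i)"
  unfolding permute_cfg_def by simp

lemma permute_cfg_comp:
  "\<sigma> permutes {0..<n} \<Longrightarrow> permute_cfg n \<sigma> (permute_cfg n \<tau> x) = permute_cfg n (\<tau> \<circ> \<sigma>) x"
  unfolding permute_cfg_def using permutes_in_image by (fastforce simp: restrict_def)

lemma permute_cfg_id: "x \<in> cfgs n d \<Longrightarrow> permute_cfg n id x = x"
  by (rule cfgs_eqI[of _ n d]) (auto simp: permute_cfg_in permutes_id permute_cfg_apply)

lemma permute_cfg_inv_right:
  "\<sigma> permutes {0..<n} \<Longrightarrow> x \<in> cfgs n d \<Longrightarrow> permute_cfg n \<sigma> (permute_cfg n (inv \<sigma>) x) = x"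
  by (simp add: permute_cfg_comp permutes_inv_o permute_cfg_id)

lemma permute_cfg_inv_left:
  "\<sigma> permutes {0..<n} \<Longrightarrow> x \<in> cfgs n d \<Longrightarrow> permute_cfg n (inv \<sigma>) (permute_cfg n \<sigma> x) = x"
  by (simp add: permute_cfg_comp permutes_inv_o permute_cfg_id permutes_inv)

lemma eq_permute_cfg_iff:
  assumes "\<sigma> permutes {0..<n}" "z \<in> cfgs n d" "y \<in> cfgs n d"
  shows "y = permute_cfg n \<sigma> z \<longleftrightarrow> z = permute_cfg n (inv \<sigma>) y"
  using assms permute_cfg_inv_right[of \<sigma> n _ d] permute_cfg_inv_left[of \<sigma> n _ d] by auto

lemma pointwise_eq_iff_permute_cfg:
  assumes "\<sigma> permutes {0..<n}" "x \<in> cfgs n d" "y \<in> cfgs n d"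
  shows "(\<forall>i<n. y (\<sigma> i) = x i) \<longleftrightarrow> x = permute_cfg n \<sigma> y"
  using assms by (auto intro: cfgs_eqI simp: permute_cfg_in permute_cfg_apply)

lemma occupation_eq_iff: "occupation n N x = occupation n N y \<longleftrightarrow> (\<forall>i<n. N (x i) = N (y i))"
  unfolding occupation_def by (auto simp: restrict_def fun_eq_iff)

lemma occupation_permute_cfg:
  "\<sigma> permutes {0..<n} \<Longrightarrow> occupation n N (permute_cfg n \<sigma> x) = restrict (occupation n N x \<circ> \<sigma>) {0..<n}"
  unfolding occupation_def permute_cfg_def using permutes_in_image by (fastforce simp: restrict_def)

lemma occupation_permute_cfg_eq_iff:
  assumes "\<sigma> permutes {0..<n}"
  shows "occupation n N (permute_cfg n \<sigma> x) = occupation n N (permute_cfg n \<sigma> y)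
    \<longleftrightarrow> occupation n N x = occupation n N y"
proof -
  have "(\<forall>i<n. N (x (\<sigma> i)) = N (y (\<sigma> i))) \<longleftrightarrow> (\<forall>i<n. N (x i) = N (y i))"
    using assms by (metis atLeastLessThan_iff le0 permutes_in_image permutes_inverses(1)
        permutes_inv permutes_in_image[OF permutes_inv[OF assms]])
  then show ?thesis
    unfolding occupation_eq_iff by (simp add: permute_cfg_apply)
qed


section \<open>Operators as a complex vector space\<close>

definition op_scale :: "complex \<Rightarrow> op \<Rightarrow> op" where
  "op_scale c Y = (\<lambda>x y. c * Y x y)"

interpretation op_space: vector_space op_scale
  by unfold_locales (auto simp: op_scale_def fun_eq_iff ring_distribs)

interpretation op_space_pair: vector_space_pair op_scale op_scale ..

lemma op_scale_apply [simp]: "op_scale c Y x y = c * Y x y"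
  by (simp add: op_scale_def)

lemma sum_op_apply [simp]: "(\<Sum>i\<in>I. Y i) x y = (\<Sum>i\<in>I. Y i x y :: complex)"
  by (induction I rule: infinite_finite_induct) auto

lemma linear_op_sum_apply:
  "Vector_Spaces.linear op_scale op_scale p \<Longrightarrow> p (\<Sum>i\<in>I. Y i) x y = (\<Sum>i\<in>I. p (Y i) x y)"
  by (simp add: module_hom.sum module_hom_iff_linear[symmetric])

lemma linear_op_scale_apply:
  "Vector_Spaces.linear op_scale op_scale p \<Longrightarrow> p (op_scale c Y) x y = c * p Y x y"
  by (simp add: module_hom.scale module_hom_iff_linear[symmetric])

lemma exists_projection_onto_subspace:
  assumes "op_space.subspace V"
  obtains p where "Vector_Spaces.linear op_scale op_scale p" "\<And>Y. p Y \<in> V" "\<And>Y. Y \<in> V \<Longrightarrow> p Y = Y"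
  using op_space_pair.linear_exists_left_inverse_on[OF op_space.linear_id assms] by auto

lemma opmult_apply: "x \<in> cfgs n d \<Longrightarrow> y \<in> cfgs n d \<Longrightarrow> opmult n d A B x y = (\<Sum>z\<in>cfgs n d. A x z * B z y)"
  unfolding opmult_def by simp

lemma opmult_outside: "\<not> (x \<in> cfgs n d \<and> y \<in> cfgs n d) \<Longrightarrow> opmult n d A B x y = 0"
  unfolding opmult_def by auto

lemma opmult_add_left: "opmult n d (A + B) C = opmult n d A C + opmult n d B C"
  unfolding opmult_def by (auto simp: fun_eq_iff ring_distribs sum.distrib)

lemma opmult_add_right: "opmult n d A (B + C) = opmult n d A B + opmult n d A C"
  unfolding opmult_def by (auto simp: fun_eq_iff ring_distribs sum.distrib)

lemma opmult_scale_left: "opmult n d (op_scale c A) B = op_scale c (opmult n d A B)"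
  unfolding opmult_def by (auto simp: fun_eq_iff sum_distrib_left mult.assoc)

lemma opmult_scale_right: "opmult n d A (op_scale c B) = op_scale c (opmult n d A B)"
  unfolding opmult_def by (auto simp: fun_eq_iff sum_distrib_left mult.left_commute)

lemma opmult_zero_left [simp]: "opmult n d 0 A = 0"
  unfolding opmult_def by (auto simp: fun_eq_iff)

lemma opmult_zero_right [simp]: "opmult n d A 0 = 0"
  unfolding opmult_def by (auto simp: fun_eq_iff)

lemma subspace_ops: "op_space.subspace (ops n d)"
  unfolding op_space.subspace_def ops_def by auto

definition commuting :: "nat \<Rightarrow> nat \<Rightarrow> op \<Rightarrow> op set" where
  "commuting n d X = {Y. opmult n d X Y = opmult n d Y X}"

lemma commuting_sym: "Y \<in> commuting n d X \<longleftrightarrow> X \<in> commuting n d Y"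
  unfolding commuting_def by auto

lemma subspace_commuting: "op_space.subspace (commuting n d X)"
  unfolding op_space.subspace_def commuting_def
  by (simp add: opmult_add_left opmult_add_right opmult_scale_left opmult_scale_right)

lemma commutant_eq_Int_commuting: "commutant n d S = ops n d \<inter> (\<Inter>X\<in>S. commuting n d X)"
  unfolding commutant_def commuting_def by auto

lemma subspace_commutant: "op_space.subspace (commutant n d S)"
  unfolding commutant_eq_Int_commuting
  by (intro op_space.subspace_inter subspace_ops op_space.subspace_Int subspace_commuting)

lemma commutant_antimono: "S \<subseteq> T \<Longrightarrow> commutant n d T \<subseteq> commutant n d S"
  unfolding commutant_def by auto

lemma commutant_span [simp]: "commutant n d (op_space.span S) = commutant n d S"
proof
  show "commutant n d (op_space.span S) \<subseteq> commutant n d S"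
    by (rule commutant_antimono) (rule op_space.span_superset)
  show "commutant n d S \<subseteq> commutant n d (op_space.span S)"
  proof
    fix X assume X: "X \<in> commutant n d S"
    have "op_space.span S \<subseteq> commuting n d X"
      using X by (intro op_space.span_minimal subspace_commuting)
        (auto simp: commutant_def commuting_def)
    then show "X \<in> commutant n d (op_space.span S)"
      using X unfolding commutant_def commuting_def by auto
  qed
qed

lemma commutant_Un_zero: "Z \<subseteq> {0} \<Longrightarrow> commutant n d (S \<union> Z) = commutant n d S"
  unfolding commutant_def by auto

lemma Bcom_iff: "X \<in> Bcom n d phys \<longleftrightarrow> X \<in> ops n d \<and> (\<forall>\<rho>. phys \<rho> \<longrightarrow> tpow n d \<rho> \<in> commuting n d X)"
  unfolding Bcom_def commutant_def commuting_def by auto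

lemma tpow_in_ops: "tpow n d \<rho> \<in> ops n d"
  unfolding tpow_def ops_def by auto

lemma tpow_cong: "(\<And>i j. i < d \<Longrightarrow> j < d \<Longrightarrow> A i j = B i j) \<Longrightarrow> tpow n d A = tpow n d B"
  unfolding tpow_def by (auto intro!: ext prod.cong simp: cfgs_less)

lemma opmult_perm_op_right:
  assumes "\<sigma> permutes {0..<n}" "x \<in> cfgs n d" "y \<in> cfgs n d"
  shows "opmult n d Z (perm_op n d f N \<sigma>) x y = Z x (permute_cfg n (inv \<sigma>) y) * perm_sign f N n \<sigma> y"
proof -
  have "opmult n d Z (perm_op n d f N \<sigma>) x y =
      (\<Sum>z\<in>cfgs n d. if z = permute_cfg n (inv \<sigma>) y then Z x z * perm_sign f N n \<sigma> y else 0)"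
    unfolding opmult_apply[OF assms(2,3)] perm_op_def
    using assms pointwise_eq_iff_permute_cfg[OF assms(1) assms(3)]
      eq_permute_cfg_iff[OF assms(1) _ assms(3)]
    by (intro sum.cong) auto
  then show ?thesis
    using assms by (simp add: permute_cfg_in permutes_inv)
qed

lemma opmult_perm_op_left:
  assumes "\<sigma> permutes {0..<n}" "x \<in> cfgs n d" "y \<in> cfgs n d"
  shows "opmult n d (perm_op n d f N \<sigma>) Z x y =
    perm_sign f N n \<sigma> (permute_cfg n \<sigma> x) * Z (permute_cfg n \<sigma> x) y"
proof -
  have "opmult n d (perm_op n d f N \<sigma>) Z x y =
      (\<Sum>z\<in>cfgs n d. if z = permute_cfg n \<sigma> x then perm_sign f N n \<sigma> z * Z z y else 0)"
    unfolding opmult_apply[OF assms(2,3)] perm_op_def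
    using assms pointwise_eq_iff_permute_cfg[OF assms(1) _ assms(2)] by (intro sum.cong) auto
  then show ?thesis
    using assms by (simp add: permute_cfg_in)
qed

lemma opmult_num_op_right:
  "x \<in> cfgs n d \<Longrightarrow> y \<in> cfgs n d \<Longrightarrow> opmult n d A (num_op n d N i) x y = A x y * of_nat (N (y i))"
  unfolding opmult_def num_op_def
  by (simp add: if_distrib[of "\<lambda>t. A x _ * t"] sum.delta cong: if_cong)

lemma opmult_num_op_left:
  "x \<in> cfgs n d \<Longrightarrow> y \<in> cfgs n d \<Longrightarrow> opmult n d (num_op n d N i) A x y = of_nat (N (x i)) * A x y"
  unfolding opmult_def num_op_def
  by (simp add: if_distrib[of "\<lambda>t. t * A _ y"] sum.delta' cong: if_cong)


section \<open>Block permutations and the double commutant theorem\<close>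

(* B_u P_tau: the permutation operator followed by the projection onto configurations with
   occupation numbers u. *)
definition block_perm_op :: "nat \<Rightarrow> nat \<Rightarrow> (nat \<Rightarrow> nat) \<Rightarrow> (nat \<Rightarrow> nat) \<Rightarrow> (nat \<Rightarrow> nat) \<Rightarrow> op" where
  "block_perm_op n d N u \<tau> = (\<lambda>c e. if c \<in> cfgs n d \<and> e \<in> cfgs n d \<and> occupation n N c = u \<and>
      e = permute_cfg n \<tau> c then 1 else 0)"

definition block_perm_span :: "nat \<Rightarrow> nat \<Rightarrow> (nat \<Rightarrow> nat) \<Rightarrow> op set" where
  "block_perm_span n d N = op_space.span {block_perm_op n d N u \<tau> | u \<tau>. \<tau> permutes {0..<n}}"

lemma block_perm_op_in_ops: "block_perm_op n d N u \<tau> \<in> ops n d"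
  unfolding block_perm_op_def ops_def by auto

lemma block_perm_op_in_span: "\<tau> permutes {0..<n} \<Longrightarrow> block_perm_op n d N u \<tau> \<in> block_perm_span n d N"
  unfolding block_perm_span_def by (rule op_space.span_base) auto

lemma opmult_block_perm_op_left:
  assumes "\<sigma> permutes {0..<n}" "a \<in> cfgs n d" "b \<in> cfgs n d"
  shows "opmult n d (block_perm_op n d N u \<sigma>) Z a b =
    (if occupation n N a = u then Z (permute_cfg n \<sigma> a) b else 0)"
proof -
  have "opmult n d (block_perm_op n d N u \<sigma>) Z a b =
      (\<Sum>z\<in>cfgs n d. if z = permute_cfg n \<sigma> a then (if occupation n N a = u then Z z b else 0) else 0)"
    unfolding opmult_apply[OF assms(2,3)] block_perm_op_def using assms(2) by (intro sum.cong) auto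
  then show ?thesis
    using permute_cfg_in[OF assms(1,2)] by simp
qed

lemma opmult_block_perm_ops:
  assumes \<sigma>: "\<sigma> permutes {0..<n}" and \<tau>: "\<tau> permutes {0..<n}"
  shows "opmult n d (block_perm_op n d N u \<sigma>) (block_perm_op n d N u' \<tau>) =
    (if u' = restrict (u \<circ> \<sigma>) {0..<n} then block_perm_op n d N u (\<sigma> \<circ> \<tau>) else 0)"
proof (intro ext)
  fix a b
  show "opmult n d (block_perm_op n d N u \<sigma>) (block_perm_op n d N u' \<tau>) a b =
    (if u' = restrict (u \<circ> \<sigma>) {0..<n} then block_perm_op n d N u (\<sigma> \<circ> \<tau>) else 0) a b"
  proof (cases "a \<in> cfgs n d \<and> b \<in> cfgs n d")
    case True
    then show ?thesis
      using opmult_block_perm_op_left[OF \<sigma>, of a d b N u] permute_cfg_in[OF \<sigma>, of a d]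
        occupation_permute_cfg[OF \<sigma>, of N a] permute_cfg_comp[OF \<tau>, of \<sigma> a]
      by (auto simp: block_perm_op_def)
  qed (auto simp: opmult_outside block_perm_op_def)
qed

lemma opmult_block_perm_op_in_span:
  assumes \<sigma>: "\<sigma> permutes {0..<n}" and Z: "Z \<in> block_perm_span n d N"
  shows "opmult n d (block_perm_op n d N u \<sigma>) Z \<in> block_perm_span n d N"
proof -
  let ?P = "{Z. opmult n d (block_perm_op n d N u \<sigma>) Z \<in> block_perm_span n d N}"
  have "op_space.subspace ?P"
    unfolding op_space.subspace_def block_perm_span_def
    by (simp add: opmult_add_right opmult_scale_right op_space.span_zero op_space.span_add
        op_space.span_scale)
  moreover have "{block_perm_op n d N u \<tau> | u \<tau>. \<tau> permutes {0..<n}} \<subseteq> ?P"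
    using opmult_block_perm_ops[OF \<sigma>] permutes_compose[OF _ \<sigma>]
    by (auto simp: block_perm_op_in_span) (simp add: block_perm_span_def op_space.span_zero)
  ultimately show ?thesis
    using Z op_space.span_minimal unfolding block_perm_span_def by blast
qed

definition invariant_block_ops :: "nat \<Rightarrow> nat \<Rightarrow> (nat \<Rightarrow> nat) \<Rightarrow> op set" where
  "invariant_block_ops n d N = {Z \<in> ops n d.
     (\<forall>\<sigma>. \<sigma> permutes {0..<n} \<longrightarrow>
        (\<forall>x\<in>cfgs n d. \<forall>y\<in>cfgs n d. Z (permute_cfg n \<sigma> x) (permute_cfg n \<sigma> y) = Z x y)) \<and>
     (\<forall>x y. Z x y \<noteq> 0 \<longrightarrow> occupation n N x = occupation n N y)}"

definition block_average :: "nat \<Rightarrow> nat \<Rightarrow> (nat \<Rightarrow> nat) \<Rightarrow> op \<Rightarrow> op" where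
  "block_average n d N Y = (\<lambda>x y. if x \<in> cfgs n d \<and> y \<in> cfgs n d \<and> occupation n N x = occupation n N y
     then (\<Sum>\<sigma>\<in>{\<sigma>. \<sigma> permutes {0..<n}}. Y (permute_cfg n \<sigma> x) (permute_cfg n \<sigma> y)) / fact n else 0)"

lemma card_permutations_atLeastLessThan: "card {\<sigma>. \<sigma> permutes {0..<n}} = fact n"
  by (rule card_permutations) auto

lemma block_average_in_invariant_block_ops: "block_average n d N Y \<in> invariant_block_ops n d N"
  unfolding invariant_block_ops_def
proof (intro CollectI conjI allI impI ballI)
  show "block_average n d N Y \<in> ops n d"
    unfolding ops_def block_average_def by auto
  show "occupation n N x = occupation n N y" if "block_average n d N Y x y \<noteq> 0" for x y
    using that unfolding block_average_def by (auto split: if_splits)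
  fix \<tau> x y assume \<tau>: "\<tau> permutes {0..<n}" and x: "x \<in> cfgs n d" and y: "y \<in> cfgs n d"
  have "(\<Sum>\<sigma>\<in>{\<sigma>. \<sigma> permutes {0..<n}}.
          Y (permute_cfg n \<sigma> (permute_cfg n \<tau> x)) (permute_cfg n \<sigma> (permute_cfg n \<tau> y)))
      = (\<Sum>\<sigma>\<in>{\<sigma>. \<sigma> permutes {0..<n}}. Y (permute_cfg n (\<tau> \<circ> \<sigma>) x) (permute_cfg n (\<tau> \<circ> \<sigma>) y))"
    by (rule sum.cong) (auto simp: permute_cfg_comp)
  also have "\<dots> = (\<Sum>\<sigma>\<in>{\<sigma>. \<sigma> permutes {0..<n}}. Y (permute_cfg n \<sigma> x) (permute_cfg n \<sigma> y))"
    using setum_permutations_compose_left[OF \<tau>, of "\<lambda>\<sigma>. Y (permute_cfg n \<sigma> x) (permute_cfg n \<sigma> y)"]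
    by simp
  finally show "block_average n d N Y (permute_cfg n \<tau> x) (permute_cfg n \<tau> y) =
      block_average n d N Y x y"
    unfolding block_average_def
    using permute_cfg_in[OF \<tau> x] permute_cfg_in[OF \<tau> y] x y occupation_permute_cfg_eq_iff[OF \<tau>]
    by simp
qed

definition unit_op :: "cfg \<Rightarrow> cfg \<Rightarrow> op" where
  "unit_op c e = (\<lambda>x y. if x = c \<and> y = e then 1 else 0)"

lemma sum_unit_op_eq_block_perm_op:
  assumes \<sigma>: "\<sigma> permutes {0..<n}" and a: "a \<in> cfgs n d"
  shows "(\<Sum>e | e \<in> cfgs n d \<and> occupation n N e = occupation n N a. unit_op (permute_cfg n \<sigma> e) e)
    = block_perm_op n d N (occupation n N (permute_cfg n \<sigma> a)) (inv \<sigma>)"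
proof (intro ext)
  fix c e'
  let ?B = "{e. e \<in> cfgs n d \<and> occupation n N e = occupation n N a}"
  have "(\<Sum>e\<in>?B. unit_op (permute_cfg n \<sigma> e) e c e')
      = (\<Sum>e\<in>?B. if e = e' then (if c = permute_cfg n \<sigma> e' then 1 else 0) else 0)"
    unfolding unit_op_def by (rule sum.cong) auto
  also have "\<dots> = (if e' \<in> cfgs n d \<and> occupation n N e' = occupation n N a \<and>
      c = permute_cfg n \<sigma> e' then 1 else 0)"
    by (simp add: sum.delta')
  also have "\<dots> = block_perm_op n d N (occupation n N (permute_cfg n \<sigma> a)) (inv \<sigma>) c e'"
    unfolding block_perm_op_def
    using permute_cfg_in[OF \<sigma>] eq_permute_cfg_iff[OF \<sigma>] permute_cfg_inv_right[OF \<sigma>]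
      occupation_permute_cfg_eq_iff[OF \<sigma>, of N] a
    by (smt (verit))
  finally show "(\<Sum>e\<in>?B. unit_op (permute_cfg n \<sigma> e) e) c e'
    = block_perm_op n d N (occupation n N (permute_cfg n \<sigma> a)) (inv \<sigma>) c e'"
    by simp
qed

(* p Y x b = (\<Sum>y e. Y y e * p (unit_op y e) x b), so (\<lambda>x y. p (unit_op y e) x b) is a slice
   of the matrix of the linear map p. *)
definition proj_slice :: "nat \<Rightarrow> nat \<Rightarrow> (nat \<Rightarrow> nat) \<Rightarrow> (op \<Rightarrow> op) \<Rightarrow> cfg \<Rightarrow> cfg \<Rightarrow> op" where
  "proj_slice n d N p b e = block_average n d N (\<lambda>x y. p (unit_op y e) x b)"

context
  fixes n d :: nat and N :: "nat \<Rightarrow> nat" and p :: "op \<Rightarrow> op"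
  assumes p_linear: "Vector_Spaces.linear op_scale op_scale p"
    and p_range: "\<And>Y. p Y \<in> block_perm_span n d N"
    and p_id: "\<And>Y. Y \<in> block_perm_span n d N \<Longrightarrow> p Y = Y"
begin

lemma sum_proj_slice_diagonal:
  assumes a: "a \<in> cfgs n d" and b: "b \<in> cfgs n d"
  shows "(\<Sum>e\<in>cfgs n d. proj_slice n d N p b e a e) = (if a = b then 1 else 0)"
proof -
  let ?P = "{\<sigma>. \<sigma> permutes {0..<n}}"
  let ?B = "{e. e \<in> cfgs n d \<and> occupation n N e = occupation n N a}"
  have "(\<Sum>e\<in>cfgs n d. proj_slice n d N p b e a e) = (\<Sum>e\<in>?B. proj_slice n d N p b e a e)"
    by (rule sum.mono_neutral_right) (auto simp: proj_slice_def block_average_def)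
  also have "\<dots> = (\<Sum>e\<in>?B. (\<Sum>\<sigma>\<in>?P. p (unit_op (permute_cfg n \<sigma> e) e) (permute_cfg n \<sigma> a) b) / fact n)"
    using a by (intro sum.cong) (auto simp: proj_slice_def block_average_def)
  also have "\<dots> = (\<Sum>e\<in>?B. \<Sum>\<sigma>\<in>?P. p (unit_op (permute_cfg n \<sigma> e) e) (permute_cfg n \<sigma> a) b) / fact n"
    by (simp add: sum_divide_distrib)
  also have "\<dots> = (\<Sum>\<sigma>\<in>?P. p (\<Sum>e\<in>?B. unit_op (permute_cfg n \<sigma> e) e) (permute_cfg n \<sigma> a) b) / fact n"
    by (subst sum.swap) (simp add: linear_op_sum_apply[OF p_linear])
  also have "\<dots> = (\<Sum>\<sigma>\<in>?P. block_perm_op n d N (occupation n N (permute_cfg n \<sigma> a)) (inv \<sigma>)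
      (permute_cfg n \<sigma> a) b) / fact n"
    using sum_unit_op_eq_block_perm_op[OF _ a, of _ N]
    by (intro arg_cong2[where f = "(/)"] sum.cong refl)
      (simp add: p_id block_perm_op_in_span permutes_inv)
  also have "\<dots> = (\<Sum>\<sigma>\<in>?P. if a = b then 1 else 0) / fact n"
    using a b by (intro arg_cong2[where f = "(/)"] sum.cong refl)
      (auto simp: block_perm_op_def permute_cfg_in permute_cfg_inv_left)
  finally show ?thesis
    by (simp add: card_permutations_atLeastLessThan)
qed

lemma sum_opmult_proj_slice:
  assumes a: "a \<in> cfgs n d" and b: "b \<in> cfgs n d"
  shows "(\<Sum>e\<in>cfgs n d. opmult n d (proj_slice n d N p b e) X a e)
    = (\<Sum>\<sigma>\<in>{\<sigma>. \<sigma> permutes {0..<n}}.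
        p (\<Sum>z | z \<in> cfgs n d \<and> occupation n N z = occupation n N a.
             \<Sum>e\<in>cfgs n d. op_scale (X z e) (unit_op (permute_cfg n \<sigma> z) e))
          (permute_cfg n \<sigma> a) b) / fact n"
proof -
  let ?P = "{\<sigma>. \<sigma> permutes {0..<n}}"
  let ?B = "{z. z \<in> cfgs n d \<and> occupation n N z = occupation n N a}"
  let ?f = "\<lambda>\<sigma> z e. p (unit_op (permute_cfg n \<sigma> z) e) (permute_cfg n \<sigma> a) b"
  have "(\<Sum>e\<in>cfgs n d. opmult n d (proj_slice n d N p b e) X a e)
      = (\<Sum>e\<in>cfgs n d. \<Sum>z\<in>?B. (\<Sum>\<sigma>\<in>?P. ?f \<sigma> z e) / fact n * X z e)"
  proof (intro sum.cong refl)
    fix e assume e: "e \<in> cfgs n d"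
    have "opmult n d (proj_slice n d N p b e) X a e = (\<Sum>z\<in>?B. proj_slice n d N p b e a z * X z e)"
      unfolding opmult_apply[OF a e]
      by (rule sum.mono_neutral_right) (auto simp: proj_slice_def block_average_def)
    also have "\<dots> = (\<Sum>z\<in>?B. (\<Sum>\<sigma>\<in>?P. ?f \<sigma> z e) / fact n * X z e)"
      using a by (intro sum.cong) (auto simp: proj_slice_def block_average_def)
    finally show "opmult n d (proj_slice n d N p b e) X a e = \<dots>" .
  qed
  also have "\<dots> = (\<Sum>e\<in>cfgs n d. \<Sum>z\<in>?B. \<Sum>\<sigma>\<in>?P. X z e * ?f \<sigma> z e) / fact n"
    by (simp add: sum_divide_distrib sum_distrib_left mult.commute)
  also have "\<dots> = (\<Sum>\<sigma>\<in>?P. \<Sum>z\<in>?B. \<Sum>e\<in>cfgs n d. X z e * ?f \<sigma> z e) / fact n"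
    by (subst sum.swap, subst sum.swap) (intro arg_cong2[where f = "(/)"] sum.cong refl sum.swap)
  also have "\<dots> = (\<Sum>\<sigma>\<in>?P. p (\<Sum>z\<in>?B. \<Sum>e\<in>cfgs n d. op_scale (X z e) (unit_op (permute_cfg n \<sigma> z) e))
      (permute_cfg n \<sigma> a) b) / fact n"
    by (simp add: linear_op_sum_apply[OF p_linear] linear_op_scale_apply[OF p_linear])
  finally show ?thesis .
qed

lemma proj_slice_trace_in_span:
  "(\<lambda>a b. if a \<in> cfgs n d \<and> b \<in> cfgs n d
      then \<Sum>e\<in>cfgs n d. opmult n d (proj_slice n d N p b e) X a e else 0)
    \<in> block_perm_span n d N"
proof -
  let ?P = "{\<sigma>. \<sigma> permutes {0..<n}}"
  let ?V = "occupation n N ` cfgs n d"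
  define R where "R \<sigma> u = (\<Sum>z | z \<in> cfgs n d \<and> occupation n N z = u.
      \<Sum>e\<in>cfgs n d. op_scale (X z e) (unit_op (permute_cfg n \<sigma> z) e))" for \<sigma> u
  have "(\<Sum>e\<in>cfgs n d. opmult n d (proj_slice n d N p b e) X a e)
      = (\<Sum>\<sigma>\<in>?P. \<Sum>u\<in>?V. opmult n d (block_perm_op n d N u \<sigma>) (p (R \<sigma> u)) a b) / fact n"
    if a: "a \<in> cfgs n d" and b: "b \<in> cfgs n d" for a b
    unfolding sum_opmult_proj_slice[OF a b] R_def
    using a b by (intro arg_cong2[where f = "(/)"] sum.cong refl)
      (simp add: opmult_block_perm_op_left sum.delta)
  then have "(\<lambda>a b. if a \<in> cfgs n d \<and> b \<in> cfgs n d
      then \<Sum>e\<in>cfgs n d. opmult n d (proj_slice n d N p b e) X a e else 0)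
      = op_scale (1 / fact n) (\<Sum>\<sigma>\<in>?P. \<Sum>u\<in>?V. opmult n d (block_perm_op n d N u \<sigma>) (p (R \<sigma> u)))"
    by (auto simp: fun_eq_iff opmult_outside)
  also have "\<dots> \<in> block_perm_span n d N"
    unfolding block_perm_span_def
    by (intro op_space.span_scale op_space.span_sum)
      (auto simp: opmult_block_perm_op_in_span p_range block_perm_span_def[symmetric])
  finally show ?thesis .
qed

end

theorem commutant_invariant_block_ops_subset_block_perm_span:
  "commutant n d (invariant_block_ops n d N) \<subseteq> block_perm_span n d N"
proof
  fix X assume X: "X \<in> commutant n d (invariant_block_ops n d N)"
  obtain p where p: "Vector_Spaces.linear op_scale op_scale p" "\<And>Y. p Y \<in> block_perm_span n d N"
    "\<And>Y. Y \<in> block_perm_span n d N \<Longrightarrow> p Y = Y"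
    using exists_projection_onto_subspace[of "block_perm_span n d N"]
    unfolding block_perm_span_def by blast
  have comm: "opmult n d X (proj_slice n d N p b e) = opmult n d (proj_slice n d N p b e) X" for b e
    using X block_average_in_invariant_block_ops unfolding commutant_def proj_slice_def by blast
  define T where "T = (\<lambda>a b. if a \<in> cfgs n d \<and> b \<in> cfgs n d
      then \<Sum>e\<in>cfgs n d. opmult n d (proj_slice n d N p b e) X a e else 0)"
  have "T \<in> block_perm_span n d N"
    unfolding T_def by (rule proj_slice_trace_in_span[OF p])
  moreover have "X = T"
  proof (intro ext)
    fix a b
    show "X a b = T a b"
    proof (cases "a \<in> cfgs n d \<and> b \<in> cfgs n d")
      case True
      then have a: "a \<in> cfgs n d" and b: "b \<in> cfgs n d" by auto
      have "X a b = (\<Sum>z\<in>cfgs n d. X a z * (if z = b then 1 else 0))"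
        using b by (simp add: sum.delta' if_distrib[of "\<lambda>t. X a _ * t"] cong: if_cong)
      also have "\<dots> = (\<Sum>z\<in>cfgs n d. X a z * (\<Sum>e\<in>cfgs n d. proj_slice n d N p b e z e))"
        using sum_proj_slice_diagonal[OF p _ b] by (intro sum.cong) auto
      also have "\<dots> = (\<Sum>e\<in>cfgs n d. opmult n d X (proj_slice n d N p b e) a e)"
        unfolding sum_distrib_left by (subst sum.swap) (simp add: opmult_apply a)
      finally show ?thesis
        using True by (simp add: T_def comm)
    next
      case False
      then show ?thesis
        using X unfolding T_def commutant_def ops_def by auto
    qed
  qed
  ultimately show "X \<in> block_perm_span n d N"
    by simp
qed


section \<open>Polarization: symmetrized matrix units as combinations of tensor powers\<close>

lemma sum_surjective_self_maps_inclusion_exclusion: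
  fixes m :: "'a \<Rightarrow> 'a \<Rightarrow> complex"
  assumes I: "finite I"
  shows "(\<Sum>h | h \<in> I \<rightarrow>\<^sub>E I \<and> h ` I = I. \<Prod>i\<in>I. m i (h i)) =
    (\<Sum>T\<in>Pow I. (-1) ^ (card I - card T) * (\<Prod>i\<in>I. \<Sum>k\<in>T. m i k))"
proof -
  define f where "f S = (\<Sum>h | h \<in> I \<rightarrow>\<^sub>E S \<and> h ` I = S. \<Prod>i\<in>I. m i (h i))" for S
  have "(\<Prod>i\<in>I. \<Sum>k\<in>S. m i k) = sum f (Pow S)" if S: "finite S" for S
  proof -
    have "(\<Prod>i\<in>I. \<Sum>k\<in>S. m i k) = (\<Sum>h\<in>I \<rightarrow>\<^sub>E S. \<Prod>i\<in>I. m i (h i))"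
      using I S by (simp add: prod_sum_PiE)
    also have "\<dots> = (\<Sum>T\<in>Pow S. \<Sum>h | h \<in> I \<rightarrow>\<^sub>E S \<and> h ` I = T. \<Prod>i\<in>I. m i (h i))"
      by (rule sum.group[symmetric]) (use I S in \<open>auto simp: finite_PiE\<close>)
    also have "\<dots> = sum f (Pow S)"
      unfolding f_def by (intro sum.cong refl arg_cong2[where f = sum]) (auto simp: PiE_def Pi_def)
    finally show ?thesis .
  qed
  then have "f I = (\<Sum>T\<in>Pow I. (-1) ^ (card I - card T) * (\<Prod>i\<in>I. \<Sum>k\<in>T. m i k))"
    using inclusion_exclusion_mobius[of "\<lambda>S. \<Prod>i\<in>I. \<Sum>k\<in>S. m i k" f I] I by simp
  then show ?thesis
    unfolding f_def .
qed

lemma bij_betw_restrict_permutations: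
  "bij_betw (\<lambda>\<sigma>. restrict \<sigma> I) {\<sigma>. \<sigma> permutes I} {h. h \<in> I \<rightarrow>\<^sub>E I \<and> h ` I = I}" if "finite I"
proof (rule bij_betwI[where g = "\<lambda>h x. if x \<in> I then h x else x"])
  show "(\<lambda>\<sigma>. restrict \<sigma> I) \<in> {\<sigma>. \<sigma> permutes I} \<rightarrow> {h. h \<in> I \<rightarrow>\<^sub>E I \<and> h ` I = I}"
    using permutes_image permutes_in_image by fastforce
  show "(\<lambda>h x. if x \<in> I then h x else x) \<in> {h. h \<in> I \<rightarrow>\<^sub>E I \<and> h ` I = I} \<rightarrow> {\<sigma>. \<sigma> permutes I}"
  proof
    fix h assume h: "h \<in> {h. h \<in> I \<rightarrow>\<^sub>E I \<and> h ` I = I}"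
    have "inj_on h I"
      using h \<open>finite I\<close> by (intro finite_surj_inj) auto
    then have "bij_betw (\<lambda>x. if x \<in> I then h x else x) I I"
      using h unfolding bij_betw_def by (auto simp: inj_on_def image_def)
    then show "(\<lambda>x. if x \<in> I then h x else x) \<in> {\<sigma>. \<sigma> permutes I}"
      by (simp add: bij_imp_permutes)
  qed
qed (auto intro!: ext simp: permutes_not_in PiE_def extensional_def)

lemma sum_permutations_prod_inclusion_exclusion:
  fixes m :: "nat \<Rightarrow> nat \<Rightarrow> complex"
  shows "(\<Sum>\<sigma>\<in>{\<sigma>. \<sigma> permutes {0..<n}}. \<Prod>i<n. m i (\<sigma> i)) =
    (\<Sum>T\<in>Pow {..<n}. (-1) ^ (n - card T) * (\<Prod>i<n. \<Sum>k\<in>T. m i k))"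
proof -
  have "(\<Sum>\<sigma>\<in>{\<sigma>. \<sigma> permutes {..<n}}. \<Prod>i<n. m i (\<sigma> i))
      = (\<Sum>\<sigma>\<in>{\<sigma>. \<sigma> permutes {..<n}}. \<Prod>i<n. m i (restrict \<sigma> {..<n} i))"
    by (intro sum.cong prod.cong) auto
  also have "\<dots> = (\<Sum>h | h \<in> {..<n} \<rightarrow>\<^sub>E {..<n} \<and> h ` {..<n} = {..<n}. \<Prod>i<n. m i (h i))"
    by (rule sum.reindex_bij_betw[OF bij_betw_restrict_permutations]) simp
  finally show ?thesis
    using sum_surjective_self_maps_inclusion_exclusion[of "{..<n}" m]
    by (simp add: atLeast0LessThan)
qed

definition sym_unit_op :: "nat \<Rightarrow> nat \<Rightarrow> cfg \<Rightarrow> cfg \<Rightarrow> op" where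
  "sym_unit_op n d a b = (\<Sum>\<sigma>\<in>{\<sigma>. \<sigma> permutes {0..<n}}. unit_op (permute_cfg n \<sigma> a) (permute_cfg n \<sigma> b))"

lemma sym_unit_op_eq_sum_tpow:
  assumes a: "a \<in> cfgs n d" and b: "b \<in> cfgs n d"
  shows "sym_unit_op n d a b = (\<Sum>T\<in>Pow {..<n}. op_scale ((-1) ^ (n - card T))
    (tpow n d (\<lambda>p q. \<Sum>k\<in>T. if p = a k \<and> q = b k then 1 else 0)))"
proof (intro ext)
  fix x y
  show "sym_unit_op n d a b x y = (\<Sum>T\<in>Pow {..<n}. op_scale ((-1) ^ (n - card T))
    (tpow n d (\<lambda>p q. \<Sum>k\<in>T. if p = a k \<and> q = b k then 1 else 0))) x y"
  proof (cases "x \<in> cfgs n d \<and> y \<in> cfgs n d")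
    case True
    have "(\<Prod>i<n. if x i = a (\<sigma> i) \<and> y i = b (\<sigma> i) then 1 else 0 :: complex)
        = (if x = permute_cfg n \<sigma> a \<and> y = permute_cfg n \<sigma> b then 1 else 0)"
      if "\<sigma> permutes {0..<n}" for \<sigma>
      using pointwise_eq_iff_permute_cfg[OF that _ a, of x]
        pointwise_eq_iff_permute_cfg[OF that _ b, of y] True
      by (auto simp: prod_zero_iff)
    then have "sym_unit_op n d a b x y
        = (\<Sum>\<sigma>\<in>{\<sigma>. \<sigma> permutes {0..<n}}. \<Prod>i<n. if x i = a (\<sigma> i) \<and> y i = b (\<sigma> i) then 1 else 0)"
      unfolding sym_unit_op_def unit_op_def by simp
    then show ?thesis
      using True
        sum_permutations_prod_inclusion_exclusion[of "\<lambda>i k. if x i = a k \<and> y i = b k then 1 else 0" n]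
      by (simp add: tpow_def)
  next
    case False
    then show ?thesis
      using permute_cfg_in[of _ n a d] permute_cfg_in[of _ n b d] a b
      by (auto simp: sym_unit_op_def unit_op_def tpow_def intro!: sum.neutral)
  qed
qed

lemma sym_unit_op_in_span_tpow:
  assumes a: "a \<in> cfgs n d" and b: "b \<in> cfgs n d" and ab: "occupation n N a = occupation n N b"
  shows "sym_unit_op n d a b \<in> op_space.span {tpow n d A | A. commutes_number d N A}"
proof -
  have "commutes_number d N (\<lambda>p q. \<Sum>k\<in>T. if p = a k \<and> q = b k then 1 else 0)"
    if T: "T \<in> Pow {..<n}" for T
    unfolding commutes_number_def sum_distrib_left sum_distrib_right
    using ab T by (intro allI impI sum.cong) (auto simp: occupation_eq_iff)
  then show ?thesis
    unfolding sym_unit_op_eq_sum_tpow[OF a b]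
    by (intro op_space.span_sum op_space.span_scale op_space.span_base) blast
qed

lemma invariant_op_eq_sum_sym_unit_op:
  assumes Z: "Z \<in> ops n d"
    and inv: "\<And>\<sigma> x y. \<sigma> permutes {0..<n} \<Longrightarrow> x \<in> cfgs n d \<Longrightarrow> y \<in> cfgs n d \<Longrightarrow>
      Z (permute_cfg n \<sigma> x) (permute_cfg n \<sigma> y) = Z x y"
  shows "Z = (\<Sum>p\<in>cfgs n d \<times> cfgs n d.
    op_scale (Z (fst p) (snd p) / fact n) (sym_unit_op n d (fst p) (snd p)))"
proof (intro ext)
  let ?P = "{\<sigma>. \<sigma> permutes {0..<n}}"
  let ?C = "cfgs n d \<times> cfgs n d"
  fix x y
  show "Z x y = (\<Sum>p\<in>?C. op_scale (Z (fst p) (snd p) / fact n) (sym_unit_op n d (fst p) (snd p))) x y"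
  proof (cases "x \<in> cfgs n d \<and> y \<in> cfgs n d")
    case True
    then have x: "x \<in> cfgs n d" and y: "y \<in> cfgs n d" by auto
    have "(\<Sum>p\<in>?C. op_scale (Z (fst p) (snd p) / fact n) (sym_unit_op n d (fst p) (snd p))) x y
        = (\<Sum>\<sigma>\<in>?P. \<Sum>p\<in>?C.
            if p = (permute_cfg n (inv \<sigma>) x, permute_cfg n (inv \<sigma>) y)
            then Z (fst p) (snd p) / fact n else 0)"
      unfolding sym_unit_op_def unit_op_def
      by (subst sum.swap) (auto simp: sum_distrib_left eq_permute_cfg_iff x y intro!: sum.cong)
    also have "\<dots> = (\<Sum>\<sigma>\<in>?P. Z x y / fact n)"
    proof (intro sum.cong refl)
      fix \<sigma> assume "\<sigma> \<in> ?P"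
      then have \<sigma>: "inv \<sigma> permutes {0..<n}" by (simp add: permutes_inv)
      then show "(\<Sum>p\<in>?C. if p = (permute_cfg n (inv \<sigma>) x, permute_cfg n (inv \<sigma>) y)
          then Z (fst p) (snd p) / fact n else 0) = Z x y / fact n"
        using inv[OF \<sigma> x y] permute_cfg_in[OF \<sigma> x] permute_cfg_in[OF \<sigma> y]
        by (subst sum.delta) auto
    qed
    also have "\<dots> = Z x y"
      by (simp add: card_permutations_atLeastLessThan)
    finally show ?thesis ..
  next
    case False
    then show ?thesis
      using Z permute_cfg_in[of _ n _ d]
      by (auto simp: ops_def sym_unit_op_def unit_op_def intro!: sum.neutral)
  qed
qed

lemma invariant_block_ops_subset_span_tpow:
  "invariant_block_ops n d N \<subseteq> op_space.span {tpow n d A | A. commutes_number d N A}"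
proof
  fix Z assume Z: "Z \<in> invariant_block_ops n d N"
  then have "Z = (\<Sum>p\<in>cfgs n d \<times> cfgs n d.
      op_scale (Z (fst p) (snd p) / fact n) (sym_unit_op n d (fst p) (snd p)))"
    unfolding invariant_block_ops_def by (intro invariant_op_eq_sum_sym_unit_op) auto
  also have "\<dots> \<in> op_space.span {tpow n d A | A. commutes_number d N A}"
  proof (intro op_space.span_sum)
    fix p assume "p \<in> cfgs n d \<times> cfgs n d"
    then show "op_scale (Z (fst p) (snd p) / fact n) (sym_unit_op n d (fst p) (snd p))
        \<in> op_space.span {tpow n d A | A. commutes_number d N A}"
      using Z sym_unit_op_in_span_tpow[of "fst p" n d "snd p" N] op_space.span_zero
      by (cases "Z (fst p) (snd p) = 0") (auto simp: invariant_block_ops_def intro: op_space.span_scale)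
  qed
  finally show "Z \<in> op_space.span {tpow n d A | A. commutes_number d N A}" .
qed


section \<open>Commuting with all number-conserving tensor powers\<close>

lemma tpow_pencil_in_commuting:
  fixes B D :: "nat \<Rightarrow> nat \<Rightarrow> complex"
  assumes S: "infinite S" and comm: "\<And>s. s \<in> S \<Longrightarrow> tpow n d (\<lambda>i j. B i j + s * D i j) \<in> commuting n d X"
  shows "tpow n d (\<lambda>i j. B i j + t * D i j) \<in> commuting n d X"
  unfolding commuting_def
proof (intro CollectI ext)
  fix x y
  show "opmult n d X (tpow n d (\<lambda>i j. B i j + t * D i j)) x y =
    opmult n d (tpow n d (\<lambda>i j. B i j + t * D i j)) X x y"
  proof (cases "x \<in> cfgs n d \<and> y \<in> cfgs n d")
    case True
    then have x: "x \<in> cfgs n d" and y: "y \<in> cfgs n d" by auto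
    define q where "q = (\<Sum>z\<in>cfgs n d. smult (X x z) (\<Prod>i<n. [:B (z i) (y i), D (z i) (y i):]))
       - (\<Sum>z\<in>cfgs n d. smult (X z y) (\<Prod>i<n. [:B (x i) (z i), D (x i) (z i):]))"
    have ev: "poly q s = opmult n d X (tpow n d (\<lambda>i j. B i j + s * D i j)) x y
        - opmult n d (tpow n d (\<lambda>i j. B i j + s * D i j)) X x y" for s
      unfolding q_def using x y
      by (simp add: poly_sum poly_prod opmult_apply tpow_def mult.commute[of s] mult.commute[of "X _ y"]
          cong: sum.cong)
    have "q = 0"
    proof (rule ccontr)
      assume "q \<noteq> 0"
      then have "finite {s. poly q s = 0}" by (rule poly_roots_finite)
      moreover have "S \<subseteq> {s. poly q s = 0}" using comm ev unfolding commuting_def by auto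
      ultimately show False using S finite_subset by blast
    qed
    then show ?thesis using ev[of t] by simp
  qed (simp add: opmult_outside)
qed

lemma norm_mult_le_sum_norm_squares:
  fixes v :: "nat \<Rightarrow> complex"
  assumes "i < d" "j < d"
  shows "cmod (v i) * cmod (v j) \<le> (\<Sum>k<d. (cmod (v k))\<^sup>2)"
proof -
  have "(cmod (v i))\<^sup>2 \<le> (\<Sum>k<d. (cmod (v k))\<^sup>2)" "(cmod (v j))\<^sup>2 \<le> (\<Sum>k<d. (cmod (v k))\<^sup>2)"
    using assms by (auto intro: member_le_sum)
  moreover have "2 * (cmod (v i) * cmod (v j)) \<le> (cmod (v i))\<^sup>2 + (cmod (v j))\<^sup>2"
    using sum_squares_bound[of "cmod (v i)" "cmod (v j)"] by (simp add: power2_eq_square)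
  ultimately show ?thesis
    by linarith
qed

definition unit_matrix :: "nat \<Rightarrow> nat \<Rightarrow> nat \<Rightarrow> complex" where
  "unit_matrix d i j = (if i = j \<and> i < d then 1 else 0)"

lemma quadratic_form_shift_nonneg:
  fixes H :: "nat \<Rightarrow> nat \<Rightarrow> complex" and v :: "nat \<Rightarrow> complex"
  assumes s: "(\<Sum>i<d. \<Sum>j<d. cmod (H i j)) \<le> s"
  shows "0 \<le> Re (\<Sum>i<d. \<Sum>j<d. cnj (v i) * (H i j + of_real s * unit_matrix d i j) * v j)"
proof -
  define \<nu> where "\<nu> = (\<Sum>k<d. (cmod (v k))\<^sup>2)"
  define Q where "Q = (\<Sum>i<d. \<Sum>j<d. cnj (v i) * H i j * v j)"
  have "(\<Sum>j<d. cnj (v i) * (of_real s * unit_matrix d i j) * v j) = of_real s * of_real ((cmod (v i))\<^sup>2)"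
    if "i < d" for i
  proof -
    have "(\<Sum>j<d. cnj (v i) * (of_real s * unit_matrix d i j) * v j)
        = (\<Sum>j<d. if j = i then of_real s * (v i * cnj (v i)) else 0)"
      by (rule sum.cong) (auto simp: unit_matrix_def)
    then show ?thesis
      using that by (simp add: complex_norm_square[symmetric])
  qed
  then have "(\<Sum>i<d. \<Sum>j<d. cnj (v i) * (of_real s * unit_matrix d i j) * v j) = of_real (s * \<nu>)"
    unfolding \<nu>_def of_real_mult of_real_sum sum_distrib_left by simp
  then have split: "(\<Sum>i<d. \<Sum>j<d. cnj (v i) * (H i j + of_real s * unit_matrix d i j) * v j)
      = Q + of_real (s * \<nu>)"
    unfolding Q_def by (simp add: ring_distribs sum.distrib)
  have "cmod Q \<le> (\<Sum>i<d. \<Sum>j<d. cmod (H i j) * (cmod (v i) * cmod (v j)))"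
    unfolding Q_def
    by (rule order_trans[OF norm_sum sum_mono], rule order_trans[OF norm_sum])
      (simp add: norm_mult mult_ac)
  also have "\<dots> \<le> (\<Sum>i<d. \<Sum>j<d. cmod (H i j) * \<nu>)"
    unfolding \<nu>_def by (intro sum_mono mult_left_mono norm_mult_le_sum_norm_squares) auto
  also have "\<dots> \<le> s * \<nu>"
    using s by (simp add: sum_distrib_right[symmetric] \<nu>_def mult_right_mono sum_nonneg)
  finally have "cmod Q \<le> s * \<nu>" .
  moreover have "- cmod Q \<le> Re Q"
    using abs_Re_le_cmod[of Q] by linarith
  ultimately show ?thesis
    unfolding split by simp
qed

lemma commutes_number_iff: "commutes_number d N A \<longleftrightarrow> (\<forall>a<d. \<forall>b<d. A a b \<noteq> 0 \<longrightarrow> N a = N b)"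
  unfolding commutes_number_def by (metis mult.commute mult_cancel_left of_nat_eq_iff)

lemma tpow_scale: "tpow n d (\<lambda>i j. c * A i j) = op_scale (c ^ n) (tpow n d A)"
  unfolding tpow_def by (auto simp: fun_eq_iff prod.distrib)

lemma density_hermitian_shift:
  assumes d: "1 \<le> d" and H0: "\<And>i j. d \<le> i \<or> d \<le> j \<Longrightarrow> H i j = 0"
    and Hh: "\<And>i j. H j i = cnj (H i j)" and s: "1 + (\<Sum>i<d. \<Sum>j<d. cmod (H i j)) \<le> s"
  obtains r :: real where "1 \<le> r" "density d (\<lambda>i j. (H i j + of_real s * unit_matrix d i j) / of_real r)"
proof
  define M where "M i j = H i j + of_real s * unit_matrix d i j" for i j
  define r where "r = (\<Sum>i<d. Re (H i i)) + s * d"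
  have real_diag: "H i i = of_real (Re (H i i))" for i
    using Hh[of i i] by (simp add: complex_eq_iff)
  have "- (\<Sum>i<d. Re (H i i)) \<le> (\<Sum>i<d. cmod (H i i))"
    unfolding sum_negf[symmetric] by (intro sum_mono) (use abs_Re_le_cmod abs_le_D2 in blast)
  also have "\<dots> \<le> (\<Sum>i<d. \<Sum>j<d. cmod (H i j))"
    by (intro sum_mono member_le_sum) auto
  finally have "1 - s \<le> (\<Sum>i<d. Re (H i i))"
    using s by linarith
  moreover have "0 \<le> (\<Sum>i<d. \<Sum>j<d. cmod (H i j))"
    by (simp add: sum_nonneg)
  then have "s * 1 \<le> s * d"
    using d s by (intro mult_left_mono) auto
  ultimately show r: "1 \<le> r"
    unfolding r_def by linarith
  have trace: "(\<Sum>i<d. M i i) = of_real r"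
    unfolding M_def r_def unit_matrix_def
    by (subst real_diag) (simp add: sum.distrib)
  have "0 \<le> Re (\<Sum>i<d. \<Sum>j<d. cnj (v i) * M i j * v j) / r" for v
    unfolding M_def using s r by (intro divide_nonneg_pos quadratic_form_shift_nonneg) auto
  then show "density d (\<lambda>i j. (H i j + of_real s * unit_matrix d i j) / of_real r)"
    unfolding density_def M_def[symmetric]
  proof (intro conjI allI impI)
    show "M i j / of_real r = 0" if "d \<le> i \<or> d \<le> j" for i j
      using that H0 by (auto simp: M_def unit_matrix_def)
    show "M j i / of_real r = cnj (M i j / of_real r)" for i j
      using Hh[of i j] by (auto simp: M_def unit_matrix_def)
    show "(\<Sum>i<d. M i i / of_real r) = 1"
      using trace r by (simp add: sum_divide_distrib[symmetric])
  qed (simp add: sum_divide_distrib[symmetric] Re_divide_of_real mult.assoc)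
qed

lemma tpow_hermitian_commuting_Bcom:
  assumes d: "1 \<le> d" and X: "X \<in> Bcom n d (\<lambda>\<rho>. density d \<rho> \<and> commutes_number d N \<rho>)"
    and H0: "\<And>i j. d \<le> i \<or> d \<le> j \<Longrightarrow> H i j = 0" and Hh: "\<And>i j. H j i = cnj (H i j)"
    and HN: "commutes_number d N H"
  shows "tpow n d H \<in> commuting n d X"
proof -
  define s0 where "s0 = 1 + (\<Sum>i<d. \<Sum>j<d. cmod (H i j))"
  have shifted: "tpow n d (\<lambda>i j. H i j + t * unit_matrix d i j) \<in> commuting n d X"
    if "t \<in> of_real ` {s0..}" for t
  proof -
    from that obtain s where s: "s0 \<le> s" and t: "t = of_real s"
      by (auto simp: image_iff)
    obtain r where r: "1 \<le> r" and dens: "density d (\<lambda>i j. (H i j + t * unit_matrix d i j) / of_real r)"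
      using density_hermitian_shift[where H = H and s = s, OF d H0 Hh] s unfolding s0_def t by blast
    have "commutes_number d N (\<lambda>i j. (H i j + t * unit_matrix d i j) / of_real r)"
      using HN unfolding commutes_number_iff unit_matrix_def by auto
    then have "tpow n d (\<lambda>i j. (H i j + t * unit_matrix d i j) / of_real r) \<in> commuting n d X"
      using X dens by (simp add: Bcom_iff)
    then have "op_scale (of_real r ^ n) (tpow n d (\<lambda>i j. (H i j + t * unit_matrix d i j) / of_real r))
        \<in> commuting n d X"
      by (rule op_space.subspace_scale[OF subspace_commuting])
    moreover have "(\<lambda>i j. of_real r * ((H i j + t * unit_matrix d i j) / of_real r)) =
        (\<lambda>i j. H i j + t * unit_matrix d i j)"
      using r by auto
    ultimately show ?thesis
      by (simp only: tpow_scale[symmetric])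
  qed
  have "infinite (of_real ` {s0..} :: complex set)"
    using finite_image_iff[OF inj_on_subset[OF inj_of_real subset_UNIV, of "{s0..}"]] infinite_Ici[of s0]
    by simp
  from tpow_pencil_in_commuting[OF this shifted, of 0]
  show ?thesis
    by simp
qed

lemma tpow_commuting_Bcom:
  assumes d: "1 \<le> d" and X: "X \<in> Bcom n d (\<lambda>\<rho>. density d \<rho> \<and> commutes_number d N \<rho>)"
    and AN: "commutes_number d N A"
  shows "tpow n d A \<in> commuting n d X"
proof -
  define Re_part where "Re_part i j = (if i < d \<and> j < d then (A i j + cnj (A j i)) / 2 else 0)" for i j
  define Im_part where "Im_part i j = (if i < d \<and> j < d then (A i j - cnj (A j i)) / (2 * \<i>) else 0)" for i j
  have "tpow n d (\<lambda>i j. Re_part i j + t * Im_part i j) \<in> commuting n d X" if "t \<in> range of_real" for t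
  proof (rule tpow_hermitian_commuting_Bcom[OF d X])
    from that obtain s where t: "t = of_real s"
      by auto
    show "Re_part j i + t * Im_part j i = cnj (Re_part i j + t * Im_part i j)" for i j
    proof (cases "i < d \<and> j < d")
      case True
      then show ?thesis
        by (simp add: Re_part_def Im_part_def t field_simps)
    qed (auto simp: Re_part_def Im_part_def)
    show "commutes_number d N (\<lambda>i j. Re_part i j + t * Im_part i j)"
      unfolding commutes_number_iff
    proof (intro allI impI)
      fix a b assume a: "a < d" and b: "b < d" and nz: "Re_part a b + t * Im_part a b \<noteq> 0"
      show "N a = N b"
      proof (rule ccontr)
        assume "N a \<noteq> N b"
        then have "A a b = 0" "A b a = 0"
          using AN a b unfolding commutes_number_iff by fastforce+
        then show False
          using nz a b unfolding Re_part_def Im_part_def by auto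
      qed
    qed
  qed (auto simp: Re_part_def Im_part_def)
  moreover have "infinite (range (of_real :: real \<Rightarrow> complex))"
    using finite_image_iff[OF inj_of_real] infinite_UNIV_char_0 by auto
  ultimately have "tpow n d (\<lambda>i j. Re_part i j + \<i> * Im_part i j) \<in> commuting n d X"
    by (rule tpow_pencil_in_commuting[rotated])
  moreover have "tpow n d (\<lambda>i j. Re_part i j + \<i> * Im_part i j) = tpow n d A"
    by (rule tpow_cong) (simp add: Re_part_def Im_part_def field_simps)
  ultimately show ?thesis
    by simp
qed


section \<open>The commutant of the permutation and site number operators\<close>

lemma perm_sign_occupation_cong:
  "occupation n N x = occupation n N y \<Longrightarrow> perm_sign f N n \<sigma> x = perm_sign f N n \<sigma> y"
  unfolding perm_sign_def occupation_eq_iff by (auto intro!: prod.cong)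

lemma perm_sign_nonzero: "perm_sign f N n \<sigma> x \<noteq> 0"
proof -
  have "finite {(i, j). i < j \<and> j < n \<and> \<sigma> j < \<sigma> i}"
    by (rule finite_subset[of _ "{..<n} \<times> {..<n}"]) auto
  then show ?thesis
    unfolding perm_sign_def by (simp add: prod_zero_iff)
qed

lemma tpow_nonzero_occupation:
  assumes N: "commutes_number d N \<rho>" and x: "x \<in> cfgs n d" and y: "y \<in> cfgs n d"
    and nz: "tpow n d \<rho> x y \<noteq> 0"
  shows "occupation n N x = occupation n N y"
  unfolding occupation_eq_iff
proof (intro allI impI)
  fix i assume i: "i < n"
  have "\<rho> (x i) (y i) \<noteq> 0"
    using nz x y i unfolding tpow_def by (auto simp: prod_zero_iff)
  then show "N (x i) = N (y i)"
    using N cfgs_less[OF x i] cfgs_less[OF y i] unfolding commutes_number_iff by blast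
qed

lemma tpow_in_commuting_perm_op:
  assumes N: "commutes_number d N \<rho>" and \<sigma>: "\<sigma> permutes {0..<n}"
  shows "tpow n d \<rho> \<in> commuting n d (perm_op n d f N \<sigma>)"
  unfolding commuting_def
proof (intro CollectI ext)
  fix x y
  show "opmult n d (perm_op n d f N \<sigma>) (tpow n d \<rho>) x y =
    opmult n d (tpow n d \<rho>) (perm_op n d f N \<sigma>) x y"
  proof (cases "x \<in> cfgs n d \<and> y \<in> cfgs n d")
    case True
    then have x: "x \<in> cfgs n d" and y: "y \<in> cfgs n d" by auto
    have x': "permute_cfg n \<sigma> x \<in> cfgs n d" and y': "permute_cfg n (inv \<sigma>) y \<in> cfgs n d"
      using permute_cfg_in[OF \<sigma> x] permute_cfg_in[OF permutes_inv[OF \<sigma>] y] .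
    have "(\<Prod>i<n. \<rho> (x i) (permute_cfg n (inv \<sigma>) y i)) = (\<Prod>i<n. \<rho> (x i) (y (inv \<sigma> i)))"
      by (rule prod.cong) (auto simp: permute_cfg_apply)
    also have "\<dots> = (\<Prod>i<n. \<rho> (x (\<sigma> i)) (y (inv \<sigma> (\<sigma> i))))"
      using prod.permute[of \<sigma> "{..<n}" "\<lambda>i. \<rho> (x i) (y (inv \<sigma> i))"] \<sigma>
      by (simp add: atLeast0LessThan comp_def)
    also have "\<dots> = (\<Prod>i<n. \<rho> (permute_cfg n \<sigma> x i) (y i))"
      by (rule prod.cong) (auto simp: permute_cfg_apply permutes_inverses(2)[OF \<sigma>])
    finally have eq: "tpow n d \<rho> x (permute_cfg n (inv \<sigma>) y) = tpow n d \<rho> (permute_cfg n \<sigma> x) y"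
      unfolding tpow_def using x y x' y' by simp
    have "perm_sign f N n \<sigma> (permute_cfg n \<sigma> x) * tpow n d \<rho> (permute_cfg n \<sigma> x) y
        = tpow n d \<rho> (permute_cfg n \<sigma> x) y * perm_sign f N n \<sigma> y"
      using perm_sign_occupation_cong[OF tpow_nonzero_occupation[OF N x' y]]
      by (cases "tpow n d \<rho> (permute_cfg n \<sigma> x) y = 0") auto
    then show ?thesis
      using opmult_perm_op_right[OF \<sigma> x y] opmult_perm_op_left[OF \<sigma> x y] eq by simp
  qed (simp add: opmult_outside)
qed

lemma tpow_in_commuting_num_op:
  assumes N: "commutes_number d N \<rho>" and i: "i < n"
  shows "tpow n d \<rho> \<in> commuting n d (num_op n d N i)"
  unfolding commuting_def
proof (intro CollectI ext)
  fix x y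
  show "opmult n d (num_op n d N i) (tpow n d \<rho>) x y = opmult n d (tpow n d \<rho>) (num_op n d N i) x y"
  proof (cases "x \<in> cfgs n d \<and> y \<in> cfgs n d")
    case True
    then have x: "x \<in> cfgs n d" and y: "y \<in> cfgs n d" by auto
    have "of_nat (N (x i)) * tpow n d \<rho> x y = tpow n d \<rho> x y * of_nat (N (y i))"
      using tpow_nonzero_occupation[OF N x y] i unfolding occupation_eq_iff
      by (cases "tpow n d \<rho> x y = 0") auto
    then show ?thesis
      using opmult_num_op_right[OF x y] opmult_num_op_left[OF x y] by simp
  qed (simp add: opmult_outside)
qed

definition perm_num_ops :: "nat \<Rightarrow> nat \<Rightarrow> bool \<Rightarrow> (nat \<Rightarrow> nat) \<Rightarrow> op set" where
  "perm_num_ops n d f N = perm_ops n d f N \<union> {num_op n d N i | i. i < n}"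

lemma tpow_in_commutant_perm_num_ops:
  "commutes_number d N \<rho> \<Longrightarrow> tpow n d \<rho> \<in> commutant n d (perm_num_ops n d f N)"
  unfolding commutant_eq_Int_commuting perm_num_ops_def perm_ops_def
  by (auto simp: tpow_in_ops tpow_in_commuting_perm_op tpow_in_commuting_num_op)

lemma commutant_perm_num_ops_occupation:
  assumes Z: "Z \<in> commutant n d (perm_num_ops n d f N)" and nz: "Z x y \<noteq> 0"
  shows "occupation n N x = occupation n N y"
  unfolding occupation_eq_iff
proof (intro allI impI)
  fix i assume i: "i < n"
  have x: "x \<in> cfgs n d" and y: "y \<in> cfgs n d"
    using Z nz unfolding commutant_def ops_def by auto
  have "num_op n d N i \<in> perm_num_ops n d f N"
    using i unfolding perm_num_ops_def by auto
  then have "opmult n d Z (num_op n d N i) x y = opmult n d (num_op n d N i) Z x y"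
    using Z unfolding commutant_def by auto
  then have "Z x y * of_nat (N (y i)) = of_nat (N (x i)) * Z x y"
    using opmult_num_op_right[OF x y] opmult_num_op_left[OF x y] by simp
  then show "N (x i) = N (y i)"
    using nz by (simp add: mult.commute)
qed

lemma commutant_perm_num_ops_permute:
  assumes Z: "Z \<in> commutant n d (perm_num_ops n d f N)"
    and \<sigma>: "\<sigma> permutes {0..<n}" and x: "x \<in> cfgs n d" and y: "y \<in> cfgs n d"
  shows "Z x (permute_cfg n (inv \<sigma>) y) = Z (permute_cfg n \<sigma> x) y"
proof -
  have "perm_op n d f N \<sigma> \<in> perm_num_ops n d f N"
    using \<sigma> unfolding perm_num_ops_def perm_ops_def by auto
  then have "opmult n d Z (perm_op n d f N \<sigma>) = opmult n d (perm_op n d f N \<sigma>) Z"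
    using Z unfolding commutant_def by auto
  then have eq: "Z x (permute_cfg n (inv \<sigma>) y) * perm_sign f N n \<sigma> y
      = perm_sign f N n \<sigma> (permute_cfg n \<sigma> x) * Z (permute_cfg n \<sigma> x) y"
    using opmult_perm_op_right[OF \<sigma> x y, of Z f N] opmult_perm_op_left[OF \<sigma> x y, of f N Z] by simp
  show ?thesis
  proof (cases "Z (permute_cfg n \<sigma> x) y = 0")
    case False
    then have "perm_sign f N n \<sigma> (permute_cfg n \<sigma> x) = perm_sign f N n \<sigma> y"
      by (intro perm_sign_occupation_cong commutant_perm_num_ops_occupation[OF Z])
    then show ?thesis
      using eq perm_sign_nonzero[of f N n \<sigma> y] by simp
  qed (use eq perm_sign_nonzero[of f N n \<sigma> y] in simp)
qed

lemma block_perm_op_in_dcommutant: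
  assumes \<tau>: "\<tau> permutes {0..<n}"
  shows "block_perm_op n d N u \<tau> \<in> dcommutant n d (perm_num_ops n d f N)"
proof -
  have "opmult n d (block_perm_op n d N u \<tau>) Z = opmult n d Z (block_perm_op n d N u \<tau>)"
    if Z: "Z \<in> commutant n d (perm_num_ops n d f N)" for Z
  proof (intro ext)
    fix x y
    show "opmult n d (block_perm_op n d N u \<tau>) Z x y = opmult n d Z (block_perm_op n d N u \<tau>) x y"
    proof (cases "x \<in> cfgs n d \<and> y \<in> cfgs n d")
      case True
      then have x: "x \<in> cfgs n d" and y: "y \<in> cfgs n d" by auto
      let ?y' = "permute_cfg n (inv \<tau>) y"
      have "opmult n d Z (block_perm_op n d N u \<tau>) x y
          = (\<Sum>z\<in>cfgs n d. if z = ?y' then (if occupation n N z = u then Z x z else 0) else 0)"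
        unfolding opmult_apply[OF x y] block_perm_op_def
        using y eq_permute_cfg_iff[OF \<tau> _ y] by (intro sum.cong) auto
      also have "\<dots> = (if occupation n N ?y' = u then Z x ?y' else 0)"
        using permute_cfg_in[OF permutes_inv[OF \<tau>] y] by simp
      also have "\<dots> = (if occupation n N x = u then Z (permute_cfg n \<tau> x) y else 0)"
        using commutant_perm_num_ops_permute[OF Z \<tau> x y]
          commutant_perm_num_ops_occupation[OF Z, of x ?y']
        by auto
      finally show ?thesis
        using opmult_block_perm_op_left[OF \<tau> x y] by simp
    qed (simp add: opmult_outside)
  qed
  then show ?thesis
    unfolding dcommutant_def commutant_def[of n d "commutant n d _"]
    using block_perm_op_in_ops by blast
qed

lemma Bcom_number_conserving_subset_block_perm_span:
  assumes "1 \<le> d"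
  shows "Bcom n d (\<lambda>\<rho>. density d \<rho> \<and> commutes_number d N \<rho>) \<subseteq> block_perm_span n d N"
proof
  fix X assume X: "X \<in> Bcom n d (\<lambda>\<rho>. density d \<rho> \<and> commutes_number d N \<rho>)"
  then have "X \<in> commutant n d {tpow n d A | A. commutes_number d N A}"
    using tpow_commuting_Bcom[OF assms X] X commuting_sym
    unfolding Bcom_iff commutant_eq_Int_commuting by auto
  also have "\<dots> = commutant n d (op_space.span {tpow n d A | A. commutes_number d N A})"
    by simp
  also have "\<dots> \<subseteq> commutant n d (invariant_block_ops n d N)"
    by (rule commutant_antimono[OF invariant_block_ops_subset_span_tpow])
  also have "\<dots> \<subseteq> block_perm_span n d N"
    by (rule commutant_invariant_block_ops_subset_block_perm_span)
  finally show "X \<in> block_perm_span n d N" .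
qed

lemma block_perm_span_subset_dcommutant: "block_perm_span n d N \<subseteq> dcommutant n d (perm_num_ops n d f N)"
  unfolding block_perm_span_def dcommutant_def
  using block_perm_op_in_dcommutant[unfolded dcommutant_def]
  by (intro op_space.span_minimal subspace_commutant) auto

lemma dcommutant_perm_num_ops_subset_Bcom:
  "dcommutant n d (perm_num_ops n d f N) \<subseteq> Bcom n d (\<lambda>\<rho>. density d \<rho> \<and> commutes_number d N \<rho>)"
  unfolding dcommutant_def Bcom_def
  by (rule commutant_antimono) (auto intro: tpow_in_commutant_perm_num_ops)

theorem Bcom_number_conserving_eq:
  assumes "1 \<le> d"
  shows "Bcom n d (\<lambda>\<rho>. density d \<rho> \<and> commutes_number d N \<rho>) = dcommutant n d (perm_num_ops n d f N)"
    and "dcommutant n d (perm_num_ops n d f N) = block_perm_span n d N"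
  using Bcom_number_conserving_subset_block_perm_span[OF assms] block_perm_span_subset_dcommutant
    dcommutant_perm_num_ops_subset_Bcom
  by blast+

lemma dcommutant_perm_num_ops_zero:
  "dcommutant n d (perm_num_ops n d False (\<lambda>_. 0)) = dcommutant n d (perm_ops n d False N)"
proof -
  have "perm_op n d False (\<lambda>_. 0) = perm_op n d False N"
    by (simp add: fun_eq_iff perm_op_def perm_sign_def)
  then have "perm_ops n d False (\<lambda>_. 0) = perm_ops n d False N"
    by (simp add: perm_ops_def)
  moreover have "num_op n d (\<lambda>_. 0) i = 0" for i
    unfolding num_op_def by (intro ext) simp
  then have "{num_op n d (\<lambda>_. 0) i | i. i < n} \<subseteq> {0}"
    by auto
  ultimately show ?thesis
    unfolding perm_num_ops_def dcommutant_def by (simp add: commutant_Un_zero)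
qed

lemma subspace_perm_span: "op_space.subspace (perm_span n d)"
proof -
  let ?P = "{\<sigma>. \<sigma> permutes {0..<n}}"
  let ?p = "\<lambda>\<sigma>. perm_op n d False (\<lambda>_. 0) \<sigma>"
  have "0 \<in> perm_span n d"
    unfolding perm_span_def by (auto intro!: exI[of _ "\<lambda>_. 0"] simp: fun_eq_iff)
  moreover have "X + Y \<in> perm_span n d" if XY: "X \<in> perm_span n d" "Y \<in> perm_span n d" for X Y
  proof -
    obtain c c' where "X = (\<lambda>y x. \<Sum>\<sigma>\<in>?P. c \<sigma> * ?p \<sigma> y x)" "Y = (\<lambda>y x. \<Sum>\<sigma>\<in>?P. c' \<sigma> * ?p \<sigma> y x)"
      using XY unfolding perm_span_def by blast
    then show ?thesis
      unfolding perm_span_def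
      by (auto intro!: exI[of _ "\<lambda>\<sigma>. c \<sigma> + c' \<sigma>"] simp: fun_eq_iff ring_distribs sum.distrib)
  qed
  moreover have "op_scale a X \<in> perm_span n d" if X: "X \<in> perm_span n d" for a X
  proof -
    obtain c where "X = (\<lambda>y x. \<Sum>\<sigma>\<in>?P. c \<sigma> * ?p \<sigma> y x)"
      using X unfolding perm_span_def by blast
    then show ?thesis
      unfolding perm_span_def
      by (auto intro!: exI[of _ "\<lambda>\<sigma>. a * c \<sigma>"] simp: fun_eq_iff sum_distrib_left mult.assoc)
  qed
  ultimately show ?thesis
    unfolding op_space.subspace_def by blast
qed

lemma perm_span_eq_span:
  "perm_span n d = op_space.span {perm_op n d False (\<lambda>_. 0) \<sigma> | \<sigma>. \<sigma> permutes {0..<n}}"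
proof
  let ?P = "{\<sigma>. \<sigma> permutes {0..<n}}"
  let ?p = "\<lambda>\<sigma>. perm_op n d False (\<lambda>_. 0) \<sigma>"
  show "perm_span n d \<subseteq> op_space.span {?p \<sigma> | \<sigma>. \<sigma> permutes {0..<n}}"
  proof
    fix X assume "X \<in> perm_span n d"
    then obtain c where "X = (\<lambda>y x. \<Sum>\<sigma>\<in>?P. c \<sigma> * ?p \<sigma> y x)"
      unfolding perm_span_def by blast
    then have "X = (\<Sum>\<sigma>\<in>?P. op_scale (c \<sigma>) (?p \<sigma>))"
      by (simp add: fun_eq_iff)
    also have "\<dots> \<in> op_space.span {?p \<sigma> | \<sigma>. \<sigma> permutes {0..<n}}"
      by (intro op_space.span_sum op_space.span_scale op_space.span_base) blast
    finally show "X \<in> op_space.span {?p \<sigma> | \<sigma>. \<sigma> permutes {0..<n}}" .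
  qed
  have "?p \<tau> \<in> perm_span n d" if "\<tau> permutes {0..<n}" for \<tau>
    unfolding perm_span_def
  proof (intro CollectI exI[of _ "\<lambda>\<sigma>. if \<sigma> = \<tau> then 1 else 0"] ext)
    fix y x
    have "(\<Sum>\<sigma>\<in>?P. (if \<sigma> = \<tau> then 1 else 0) * ?p \<sigma> y x) = (\<Sum>\<sigma>\<in>?P. if \<sigma> = \<tau> then ?p \<sigma> y x else 0)"
      by (rule sum.cong) auto
    then show "?p \<tau> y x = (\<Sum>\<sigma>\<in>?P. (if \<sigma> = \<tau> then 1 else 0) * ?p \<sigma> y x)"
      using that by (simp add: finite_permutations)
  qed
  then show "op_space.span {?p \<sigma> | \<sigma>. \<sigma> permutes {0..<n}} \<subseteq> perm_span n d"
    by (intro op_space.span_minimal subspace_perm_span) auto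
qed

lemma block_perm_span_zero: "block_perm_span n d (\<lambda>_. 0) = perm_span n d"
proof -
  let ?u = "restrict (\<lambda>_. 0) {0..<n}"
  have occ: "occupation n (\<lambda>_. 0) c = ?u" for c
    by (simp add: occupation_def comp_def)
  have perm: "block_perm_op n d (\<lambda>_. 0) ?u \<tau> = perm_op n d False (\<lambda>_. 0) \<tau>" if "\<tau> permutes {0..<n}" for \<tau>
  proof (intro ext)
    fix c e
    show "block_perm_op n d (\<lambda>_. 0) ?u \<tau> c e = perm_op n d False (\<lambda>_. 0) \<tau> c e"
      using pointwise_eq_iff_permute_cfg[OF that, of e d c]
      by (auto simp: block_perm_op_def perm_op_def occ perm_sign_def)
  qed
  have zero: "block_perm_op n d (\<lambda>_. 0) u \<tau> = 0" if "u \<noteq> ?u" for u \<tau>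
    unfolding block_perm_op_def occ using that by (intro ext) auto
  show ?thesis
    unfolding perm_span_eq_span block_perm_span_def
  proof (intro op_space.span_eq[THEN iffD2] conjI subsetI)
    fix X assume "X \<in> {block_perm_op n d (\<lambda>_. 0) u \<tau> | u \<tau>. \<tau> permutes {0..<n}}"
    then obtain u \<tau> where X: "X = block_perm_op n d (\<lambda>_. 0) u \<tau>" and \<tau>: "\<tau> permutes {0..<n}"
      by blast
    show "X \<in> op_space.span {perm_op n d False (\<lambda>_. 0) \<sigma> | \<sigma>. \<sigma> permutes {0..<n}}"
    proof (cases "u = ?u")
      case True
      then show ?thesis
        using perm[OF \<tau>] \<tau> unfolding X by (auto intro: op_space.span_base)
    qed (simp add: X zero op_space.span_zero)
  next
    fix X assume "X \<in> {perm_op n d False (\<lambda>_. 0) \<sigma> | \<sigma>. \<sigma> permutes {0..<n}}"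
    then show "X \<in> op_space.span {block_perm_op n d (\<lambda>_. 0) u \<tau> | u \<tau>. \<tau> permutes {0..<n}}"
      using perm[symmetric] by (auto intro: op_space.span_base)
  qed
qed

theorem lemma4:
  fixes n d :: nat and N :: "nat \<Rightarrow> nat" and ferm :: bool
  assumes "d \<ge> 1"
  shows "(Bcom n d (density d) = dcommutant n d (perm_ops n d False N) \<and>
          dcommutant n d (perm_ops n d False N) = perm_span n d) \<and>
         Bcom n d (\<lambda>\<rho>. density d \<rho> \<and> commutes_number d N \<rho>) =
           dcommutant n d (perm_ops n d ferm N \<union> {num_op n d N i | i. i < n})"
proof -
  \<comment> \<open>Part (a) is the case \<open>N = 0\<close> of part (b), in which the site number operators vanish.\<close>
  have "Bcom n d (density d) = Bcom n d (\<lambda>\<rho>. density d \<rho> \<and> commutes_number d (\<lambda>_. 0) \<rho>)"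
    by (simp add: commutes_number_def)
  then have "Bcom n d (density d) = dcommutant n d (perm_ops n d False N)"
    using Bcom_number_conserving_eq(1)[OF assms, where f = False and N = "\<lambda>_. 0"]
      dcommutant_perm_num_ops_zero by simp
  moreover have "dcommutant n d (perm_ops n d False N) = perm_span n d"
    using Bcom_number_conserving_eq(2)[OF assms, where f = False and N = "\<lambda>_. 0"]
      dcommutant_perm_num_ops_zero block_perm_span_zero
    by metis
  moreover have "Bcom n d (\<lambda>\<rho>. density d \<rho> \<and> commutes_number d N \<rho>) =
      dcommutant n d (perm_ops n d ferm N \<union> {num_op n d N i | i. i < n})"
    using Bcom_number_conserving_eq(1)[OF assms] unfolding perm_num_ops_def .
  ultimately show ?thesis
    by blast
qed

end
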